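(* Assume $0<\beta\le\alpha<\sqrt n$ and $e\in\mathbb{R}^n$ satisfies $\|e\|=\sqrt n$. For every point $\bar s\in K_e(\beta)^*$, the cone $K_e(\alpha)^*$ contains the open ball $B(\bar s,r)=\{s:\|s-\bar s\|<r\}$, where \[ r=\frac1n\|\bar s\|\Big(\alpha\sqrt{n-\beta^2}-\beta\sqrt{n-\alpha^2}\Big). \]
   Context: $\mathbb{R}^n$ carries the dot product and Euclidean norm. For $0<\gamma<\sqrt n$, $K_e(\gamma)=\{x:e^Tx\ge\gamma\|x\|\}$ and $K_e(\gamma)^*=\{s:x^Ts\ge0\ \forall x\in K_e(\gamma)\}=\{s:e^Ts\ge\sqrt{n-\gamma^2}\|s\|\}$. *)

theory Defs
  imports "HOL-Analysis.Analysis"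
begin

definition Kcone :: "real^'n \<Rightarrow> real \<Rightarrow> (real^'n) set" where
  "Kcone e \<gamma> = {x. e \<bullet> x \<ge> \<gamma> * norm x}"

definition dual_cone :: "(real^'n) set \<Rightarrow> (real^'n) set" where
  "dual_cone K = {s. \<forall>x\<in>K. x \<bullet> s \<ge> 0}"

end

theory Submission
  imports Defs
begin

text \<open>Normalising \<open>u = e / sqrt n\<close>, the cone \<open>K\<^sub>e(\<gamma>)\<close> consists of the vectors making an angle at
  most \<open>\<theta>\<^sub>\<gamma>\<close> with \<open>u\<close>, where \<open>cos \<theta>\<^sub>\<gamma> = \<gamma> / sqrt n\<close>, and its dual cone consists of the vectors making
  an angle at most \<open>\<pi>/2 - \<theta>\<^sub>\<gamma>\<close> with \<open>u\<close>. Hence for \<open>x \<in> K\<^sub>e(\<alpha>)\<close> and \<open>s \<in> K\<^sub>e(\<beta>)\<^sup>*\<close> the angle between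
  \<open>x\<close> and \<open>s\<close> is at most \<open>\<pi>/2 - (\<theta>\<^sub>\<beta> - \<theta>\<^sub>\<alpha>)\<close>, so \<open>x \<bullet> s \<ge> |x| |s| sin (\<theta>\<^sub>\<beta> - \<theta>\<^sub>\<alpha>) = |x| r\<close>, and
  Cauchy-Schwarz shows that a perturbation of \<open>s\<close> of size less than \<open>r\<close> keeps \<open>x \<bullet> s\<close> positive.
  Angles are represented by their cosine-sine pairs throughout.\<close>

lemma inner_ge_orthogonal_decomposition:
  fixes u x s :: "'a::real_inner"
  assumes "norm u = 1"
  shows "(u \<bullet> x) * (u \<bullet> s) - sqrt (norm x ^ 2 - (u \<bullet> x) ^ 2) * sqrt (norm s ^ 2 - (u \<bullet> s) ^ 2)
           \<le> x \<bullet> s"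
proof -
  have uu: "u \<bullet> u = 1" using assms by (simp add: dot_square_norm)
  define x' where "x' = x - (u \<bullet> x) *\<^sub>R u"
  define s' where "s' = s - (u \<bullet> s) *\<^sub>R u"
  have split: "x \<bullet> s = (u \<bullet> x) * (u \<bullet> s) + x' \<bullet> s'"
    unfolding x'_def s'_def using uu
    by (simp add: inner_diff_left inner_diff_right inner_commute algebra_simps)
  have "norm x' ^ 2 = norm x ^ 2 - (u \<bullet> x) ^ 2" "norm s' ^ 2 = norm s ^ 2 - (u \<bullet> s) ^ 2"
    unfolding x'_def s'_def power2_norm_eq_inner using uu
    by (simp_all add: inner_diff_left inner_diff_right inner_commute algebra_simps power2_eq_square)
  then have "norm x' = sqrt (norm x ^ 2 - (u \<bullet> x) ^ 2)" "norm s' = sqrt (norm s ^ 2 - (u \<bullet> s) ^ 2)"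
    by (metis norm_ge_zero real_sqrt_unique)+
  moreover have "- (norm x' * norm s') \<le> x' \<bullet> s'"
    using Cauchy_Schwarz_ineq2[of x' s'] by (simp add: abs_le_iff)
  ultimately show ?thesis using split by simp
qed

lemma dual_circular_cone_bound:
  fixes u s :: "'a::real_inner"
  assumes "norm u = 1" and "0 < c" and "0 \<le> d" and "c\<^sup>2 + d\<^sup>2 = 1"
    and dual: "\<And>y. c * norm y \<le> u \<bullet> y \<Longrightarrow> 0 \<le> y \<bullet> s"
  shows "d * norm s \<le> u \<bullet> s"
proof -
  have uu: "u \<bullet> u = 1" using assms(1) by (simp add: dot_square_norm)
  have "c\<^sup>2 \<le> 1\<^sup>2" using assms(4) zero_le_power2[of d] unfolding power_one by linarith
  then have "c \<le> 1" by (rule power2_le_imp_le) simp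
  define t where "t = u \<bullet> s"
  define s' where "s' = s - t *\<^sub>R u"
  have us': "u \<bullet> s' = 0" unfolding s'_def t_def using uu by (simp add: inner_diff_right)
  have norm_s': "norm s' ^ 2 = norm s ^ 2 - t\<^sup>2"
    unfolding s'_def power2_norm_eq_inner t_def using uu
    by (simp add: inner_diff_left inner_diff_right inner_commute algebra_simps power2_eq_square)
  have t0: "0 \<le> t" using dual[of u] assms(1) \<open>c \<le> 1\<close> uu by (simp add: t_def)
  text \<open>Test \<open>s\<close> against the generator of the cone lying opposite to \<open>s\<close> in the plane of \<open>u\<close> and \<open>s\<close>.\<close>
  have "d * norm s' \<le> c * t"
  proof (cases "s' = 0")
    case True
    then show ?thesis using t0 assms(2) by simp
  next
    case False
    define w where "w = (1 / norm s') *\<^sub>R s'"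
    have uw: "u \<bullet> w = 0" using us' by (simp add: w_def)
    have ww: "w \<bullet> w = 1" using False by (simp add: w_def dot_square_norm power2_eq_square)
    have "w \<bullet> s = w \<bullet> s'" using uw by (simp add: s'_def inner_diff_right inner_commute)
    also have "\<dots> = norm s'" using False by (simp add: w_def dot_square_norm power2_eq_square)
    finally have ws: "w \<bullet> s = norm s'" .
    define y where "y = c *\<^sub>R u - d *\<^sub>R w"
    have "norm y ^ 2 = c\<^sup>2 + d\<^sup>2" unfolding y_def power2_norm_eq_inner using uu uw ww
      by (simp add: inner_diff_left inner_diff_right inner_commute algebra_simps power2_eq_square)
    then have "norm y = 1" using assms(4) norm_ge_zero[of y] by (auto simp add: power2_eq_1_iff)
    moreover have "u \<bullet> y = c" unfolding y_def using uu uw by (simp add: inner_diff_right)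
    ultimately have "0 \<le> y \<bullet> s" using dual by simp
    moreover have "y \<bullet> s = c * t - d * norm s'" unfolding y_def t_def using ws
      by (simp add: inner_diff_left)
    ultimately show ?thesis by simp
  qed
  then have "(d * norm s')\<^sup>2 \<le> (c * t)\<^sup>2" using assms(3) by (intro power_mono) auto
  then have "d\<^sup>2 * ((norm s)\<^sup>2 - t\<^sup>2) \<le> c\<^sup>2 * t\<^sup>2" using norm_s' by (simp add: power_mult_distrib)
  then have "(d * norm s)\<^sup>2 \<le> (c\<^sup>2 + d\<^sup>2) * t\<^sup>2" by (simp add: power_mult_distrib algebra_simps)
  then have "(d * norm s)\<^sup>2 \<le> t\<^sup>2" using assms(4) by simp
  then show ?thesis using t0 power2_le_imp_le t_def by blast
qed

lemma sqrt_norm_square_minus_le: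
  fixes a b c d :: real
  assumes "0 \<le> c" and "0 \<le> d" and "0 \<le> b" and "c\<^sup>2 + d\<^sup>2 = 1" and "c * b \<le> a"
  shows "sqrt (b\<^sup>2 - a\<^sup>2) \<le> d * b"
proof -
  have "(c * b)\<^sup>2 \<le> a\<^sup>2" using assms by (intro power_mono) auto
  moreover have "b\<^sup>2 = (c * b)\<^sup>2 + (d * b)\<^sup>2"
    using assms(4) by (simp add: power_mult_distrib flip: distrib_right)
  ultimately have "sqrt (b\<^sup>2 - a\<^sup>2) \<le> sqrt ((d * b)\<^sup>2)" by (intro real_sqrt_le_mono) linarith
  then show ?thesis using assms(2,3) by simp
qed

lemma inner_ge_of_circular_cones:
  fixes u x s :: "'a::real_inner"
  assumes u: "norm u = 1"
    and "0 \<le> ca" "0 \<le> sa" "ca\<^sup>2 + sa\<^sup>2 = 1" and x: "ca * norm x \<le> u \<bullet> x"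
    and "0 \<le> cb" "0 \<le> sb" "cb\<^sup>2 + sb\<^sup>2 = 1" and s: "sb * norm s \<le> u \<bullet> s"
  shows "norm x * norm s * (ca * sb - sa * cb) \<le> x \<bullet> s"
proof -
  have "(ca * norm x) * (sb * norm s) \<le> (u \<bullet> x) * (u \<bullet> s)"
    using x s assms(2,7) by (intro mult_mono) (simp_all add: order_trans[OF _ x])
  moreover have "sqrt ((norm x)\<^sup>2 - (u \<bullet> x)\<^sup>2) * sqrt ((norm s)\<^sup>2 - (u \<bullet> s)\<^sup>2)
                   \<le> (sa * norm x) * (cb * norm s)"
  proof (rule mult_mono)
    show "sqrt ((norm x)\<^sup>2 - (u \<bullet> x)\<^sup>2) \<le> sa * norm x"
      using sqrt_norm_square_minus_le[OF assms(2,3) norm_ge_zero assms(4) x] .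
    show "sqrt ((norm s)\<^sup>2 - (u \<bullet> s)\<^sup>2) \<le> cb * norm s"
      using sqrt_norm_square_minus_le[OF assms(7,6) norm_ge_zero trans[OF add.commute assms(8)] s] .
    show "0 \<le> sa * norm x" using assms(3) by simp
    have "\<bar>u \<bullet> s\<bar> \<le> \<bar>norm s\<bar>" using Cauchy_Schwarz_ineq2[of u s] u by simp
    then have "(u \<bullet> s)\<^sup>2 \<le> (norm s)\<^sup>2" by (simp only: abs_le_square_iff)
    then show "0 \<le> sqrt ((norm s)\<^sup>2 - (u \<bullet> s)\<^sup>2)" by simp
  qed
  ultimately show ?thesis
    using inner_ge_orthogonal_decomposition[OF u, of x s] by (simp add: algebra_simps)
qed

lemma ball_subset_dual_cone:
  assumes "\<And>x. x \<in> K \<Longrightarrow> norm x * r \<le> x \<bullet> s"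
  shows "ball s r \<subseteq> dual_cone K"
  unfolding dual_cone_def
proof (intro subsetI CollectI ballI)
  fix t x assume "t \<in> ball s r" and "x \<in> K"
  have "\<bar>x \<bullet> (t - s)\<bar> \<le> norm x * norm (t - s)" by (rule Cauchy_Schwarz_ineq2)
  also have "\<dots> \<le> norm x * r"
    using \<open>t \<in> ball s r\<close> by (intro mult_left_mono) (auto simp: dist_norm norm_minus_commute)
  finally show "0 \<le> x \<bullet> t" using assms[OF \<open>x \<in> K\<close>] by (simp add: inner_diff_right)
qed

lemma Kcone_iff_unit:
  assumes "0 < q"
  shows "x \<in> Kcone e \<gamma> \<longleftrightarrow> \<gamma> / q * norm x \<le> (1 / q) *\<^sub>R e \<bullet> x"
  using assms by (simp add: Kcone_def divide_simps mult.commute)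

lemma cos_sin_square_sum:
  assumes "0 < N" and "\<gamma>\<^sup>2 \<le> N"
  shows "(\<gamma> / sqrt N)\<^sup>2 + (sqrt (N - \<gamma>\<^sup>2) / sqrt N)\<^sup>2 = 1"
  using assms by (simp add: power_divide divide_simps)

theorem lemma5p4:
  fixes e sbar :: "real^'n" and \<alpha> \<beta> :: real
  assumes "0 < \<beta>" and "\<beta> \<le> \<alpha>" and "\<alpha> < sqrt (real CARD('n))"
    and "norm e = sqrt (real CARD('n))"
    and "sbar \<in> dual_cone (Kcone e \<beta>)"
  shows "ball sbar ((1 / real CARD('n)) * norm sbar *
           (\<alpha> * sqrt (real CARD('n) - \<beta>\<^sup>2) - \<beta> * sqrt (real CARD('n) - \<alpha>\<^sup>2)))
         \<subseteq> dual_cone (Kcone e \<alpha>)"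
proof (rule ball_subset_dual_cone)
  define N where "N = real CARD('n)"
  define u where "u = (1 / sqrt N) *\<^sub>R e"
  have N: "0 < N" "0 < sqrt N" unfolding N_def by simp_all
  have "\<alpha>\<^sup>2 < (sqrt N)\<^sup>2"
    using assms(1-3) by (intro power_strict_mono) (auto simp: N_def)
  then have "\<alpha>\<^sup>2 < N" using N by simp
  moreover have "\<beta>\<^sup>2 \<le> \<alpha>\<^sup>2" using assms(1,2) by (intro power_mono) auto
  ultimately have "\<beta>\<^sup>2 < N" by simp
  note cs = cos_sin_square_sum[OF N(1) less_imp_le[OF \<open>\<alpha>\<^sup>2 < N\<close>]]
            cos_sin_square_sum[OF N(1) less_imp_le[OF \<open>\<beta>\<^sup>2 < N\<close>]]
  have u: "norm u = 1" using assms(4) N by (simp add: u_def N_def)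
  have dual: "sqrt (N - \<beta>\<^sup>2) / sqrt N * norm sbar \<le> u \<bullet> sbar"
  proof (rule dual_circular_cone_bound[OF u _ _ cs(2)])
    fix y assume "\<beta> / sqrt N * norm y \<le> u \<bullet> y"
    then have "y \<in> Kcone e \<beta>" by (simp add: Kcone_iff_unit[OF N(2)] u_def)
    then show "0 \<le> y \<bullet> sbar" using assms(5) by (simp add: dual_cone_def)
  qed (use assms(1) N \<open>\<beta>\<^sup>2 < N\<close> in auto)
  fix x assume "x \<in> Kcone e \<alpha>"
  then have "\<alpha> / sqrt N * norm x \<le> u \<bullet> x" by (simp add: Kcone_iff_unit[OF N(2)] u_def)
  from inner_ge_of_circular_cones[OF u _ _ cs(1) this _ _ cs(2) dual]
  show "norm x * ((1 / real CARD('n)) * norm sbar *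
          (\<alpha> * sqrt (real CARD('n) - \<beta>\<^sup>2) - \<beta> * sqrt (real CARD('n) - \<alpha>\<^sup>2))) \<le> x \<bullet> sbar"
    using assms(1,2) N \<open>\<alpha>\<^sup>2 < N\<close> \<open>\<beta>\<^sup>2 < N\<close>
    by (simp add: N_def field_simps power2_eq_square)
qed

end
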